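(* Let $\mathcal{P}$ be a $\delta^+$-common vertex property with associated constant $d(\mathcal{P})$, let $k\geq 1$, $\ell\geq 2$, and let $G$ be a finite digraph with $\delta^+(G)\geq d(\mathcal{P})+2k\ell^k$. Then $G$ contains a subgraph $B$ isomorphic to $B^+_{k,\ell}$ such that every leaf of $B$ satisfies $\mathcal{P}$ in $G$.
   Context: Digraphs are finite, have no loops and no multiple copies of the same edge, but may contain two edges in opposite directions between a pair of vertices. $\delta^+(G)$ is the minimum out-degree. A vertex property $\mathcal{P}$ (a property of a pair (digraph, vertex of it)) is $\delta^+$-common if (i) there is an integer $d=d(\mathcal{P})$ such that every digraph $G$ with $\delta^+(G)\geq d$ contains a vertex satisfying $\mathcal{P}$ in $G$, and (ii) $\mathcal{P}$ is anti-monotone: whenever $H$ is a subgraph of $G$ and $v\in V(H)$ satisfies $\mathcal{P}$ in $H$, then $v$ satisfies $\mathcal{P}$ in $G$. $B^+_{k,\ell}$ is the complete $\ell$-ary tree of depth $k$ (distance from root to leaves $k$) with all edges oriented away from the root; its leaves are the $\ell^k$ vertices at depth $k$. *)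

theory Defs
  imports Main
begin

definition digraph :: "'a set \<Rightarrow> ('a \<times> 'a) set \<Rightarrow> bool" where
  "digraph V E \<longleftrightarrow> finite V \<and> E \<subseteq> V \<times> V \<and> (\<forall>v. (v, v) \<notin> E)"

definition out_degree :: "('a \<times> 'a) set \<Rightarrow> 'a \<Rightarrow> nat" where
  "out_degree E v = card {w. (v, w) \<in> E}"

text \<open>\<delta>^+(G) \<ge> d; digraphs are taken to be nonempty, so the minimum exists.\<close>
definition min_outdeg_ge :: "'a set \<Rightarrow> ('a \<times> 'a) set \<Rightarrow> nat \<Rightarrow> bool" where
  "min_outdeg_ge V E d \<longleftrightarrow> V \<noteq> {} \<and> (\<forall>v\<in>V. out_degree E v \<ge> d)"

definition subgraph :: "'a set \<Rightarrow> ('a \<times> 'a) set \<Rightarrow> 'a set \<Rightarrow> ('a \<times> 'a) set \<Rightarrow> bool" where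
  "subgraph VH EH V E \<longleftrightarrow> VH \<subseteq> V \<and> EH \<subseteq> E \<and> EH \<subseteq> VH \<times> VH"

definition delta_common_with :: "('a set \<Rightarrow> ('a \<times> 'a) set \<Rightarrow> 'a \<Rightarrow> bool) \<Rightarrow> nat \<Rightarrow> bool" where
  "delta_common_with P d \<longleftrightarrow>
     (\<forall>V E. digraph V E \<and> min_outdeg_ge V E d \<longrightarrow> (\<exists>v\<in>V. P V E v)) \<and>
     (\<forall>V E VH EH v. digraph V E \<and> subgraph VH EH V E \<and> v \<in> VH \<and> P VH EH v \<longrightarrow> P V E v)"

text \<open>B^+_{k,l}: vertices are words of length \<le> k over {0..<l}; edges s \<rightarrow> s @ [i].\<close>
definition out_tree_V :: "nat \<Rightarrow> nat \<Rightarrow> nat list set" where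
  "out_tree_V k l = {s. length s \<le> k \<and> set s \<subseteq> {0..<l}}"

definition out_tree_E :: "nat \<Rightarrow> nat \<Rightarrow> (nat list \<times> nat list) set" where
  "out_tree_E k l = {(s, s @ [i]) | s i. length s < k \<and> set s \<subseteq> {0..<l} \<and> i < l}"

definition out_tree_leaves :: "nat \<Rightarrow> nat \<Rightarrow> nat list set" where
  "out_tree_leaves k l = {s. length s = k \<and> set s \<subseteq> {0..<l}}"

definition digraph_iso :: "('b \<Rightarrow> 'a) \<Rightarrow> 'b set \<Rightarrow> ('b \<times> 'b) set \<Rightarrow> 'a set \<Rightarrow> ('a \<times> 'a) set \<Rightarrow> bool" where
  "digraph_iso f V1 E1 V2 E2 \<longleftrightarrow> bij_betw f V1 V2 \<and>
     (\<forall>x\<in>V1. \<forall>y\<in>V1. (x, y) \<in> E1 \<longleftrightarrow> (f x, f y) \<in> E2)"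

end

theory Submission
  imports Defs
begin

text \<open>Put the vertices satisfying \<open>P\<close> on level 0 and a vertex on level \<open>i + 1\<close> if it has
  at least \<open>c = 2 l^k\<close> out-neighbours on level \<open>i\<close>. If level \<open>k\<close> were empty, delete every edge
  \<open>(v, w)\<close> such that \<open>w\<close> is on some level \<open>i < k\<close> but \<open>v\<close> is not on level \<open>i + 1\<close>; this costs
  each vertex at most \<open>k (c - 1)\<close> out-edges, so out-degrees stay at least \<open>d + k\<close>. In the pruned
  digraph the vertices on none of the levels \<open>n, \<dots>, k\<close> form a closed set, nonempty for \<open>n = k\<close>
  and hence, following one edge at a time, for every \<open>n\<close>. For \<open>n = 0\<close> this set has minimum
  out-degree \<open>d\<close>, so it contains a vertex satisfying \<open>P\<close>, i.e. a vertex on level 0: a contradiction.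
  From a vertex on level \<open>k\<close> the tree is then embedded greedily, mapping depth \<open>j\<close> to level
  \<open>k - j\<close>: since \<open>c\<close> exceeds the size of the tree, fresh children are always available.\<close>

lemma greedy_distinct_representatives:
  assumes "finite I" "finite U"
    and "\<And>x. x \<in> I \<Longrightarrow> finite (C x) \<and> card I + card U \<le> card (C x)"
  shows "\<exists>g. inj_on g I \<and> (\<forall>x\<in>I. g x \<in> C x - U)"
  using assms
proof (induction I rule: finite_induct)
  case empty
  then show ?case by auto
next
  case (insert x I)
  then obtain g where g: "inj_on g I" "\<forall>y\<in>I. g y \<in> C y - U"
    by fastforce
  have "card (U \<union> g ` I) \<le> card U + card I"
    using card_Un_le[of U "g ` I"] card_image_le[OF insert.hyps(1), of g] by linarith
  also have "\<dots> < card (C x)"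
    using insert.prems(2)[of x] insert.hyps by simp
  finally have "\<not> C x \<subseteq> U \<union> g ` I"
    using insert.prems(1) insert.hyps(1) by (meson card_mono finite_UnI finite_imageI not_le)
  then obtain y where y: "y \<in> C x" "y \<notin> U" "y \<notin> g ` I"
    by blast
  have "inj_on (g(x := y)) (insert x I)"
    using g(1) y(3) insert.hyps(2) by (auto simp: inj_on_def)
  moreover have "\<forall>z\<in>insert x I. (g(x := y)) z \<in> C z - U"
    using g(2) y insert.hyps(2) by auto
  ultimately show ?case
    by blast
qed

lemma finite_out_tree_V: "finite (out_tree_V j l)"
  using finite_lists_length_le[of "{0..<l}" j]
  unfolding out_tree_V_def by (auto simp: conj_commute)

lemma finite_out_tree_leaves: "finite (out_tree_leaves j l)"
  and card_out_tree_leaves: "card (out_tree_leaves j l) = l ^ j"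
  using finite_lists_length_eq[of "{0..<l}" j] card_lists_length_eq[of "{0..<l}" j]
  unfolding out_tree_leaves_def by (auto simp: conj_commute)

lemma out_tree_V_0: "out_tree_V 0 l = {[]}"
  unfolding out_tree_V_def by auto

lemma out_tree_V_Suc: "out_tree_V (Suc j) l = out_tree_V j l \<union> out_tree_leaves (Suc j) l"
  unfolding out_tree_V_def out_tree_leaves_def by auto

lemma out_tree_V_Int_leaves_Suc: "out_tree_V j l \<inter> out_tree_leaves (Suc j) l = {}"
  unfolding out_tree_V_def out_tree_leaves_def by auto

lemma out_tree_leaves_subset_V: "out_tree_leaves j l \<subseteq> out_tree_V j l"
  unfolding out_tree_V_def out_tree_leaves_def by auto

lemma out_tree_V_mono: "j \<le> k \<Longrightarrow> out_tree_V j l \<subseteq> out_tree_V k l"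
  unfolding out_tree_V_def by auto

lemma card_out_tree_V_less:
  assumes "2 \<le> l"
  shows "card (out_tree_V j l) < 2 * l ^ j"
proof (induction j)
  case 0
  then show ?case
    using assms by (simp add: out_tree_V_0)
next
  case (Suc j)
  have "card (out_tree_V (Suc j) l) \<le> card (out_tree_V j l) + card (out_tree_leaves (Suc j) l)"
    unfolding out_tree_V_Suc by (rule card_Un_le)
  also have "\<dots> < 2 * l ^ j + l ^ Suc j"
    using Suc card_out_tree_leaves by simp
  also have "\<dots> \<le> 2 * l ^ Suc j"
    using assms by simp
  finally show ?case .
qed

lemma out_tree_E_0: "out_tree_E 0 l = {}"
  unfolding out_tree_E_def by auto

lemma out_tree_E_Suc:
  "out_tree_E (Suc j) l = out_tree_E j l \<union> {(s, s @ [i]) |s i. s \<in> out_tree_leaves j l \<and> i < l}"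
  unfolding out_tree_E_def out_tree_leaves_def by auto

lemma out_tree_E_subset: "out_tree_E j l \<subseteq> out_tree_V j l \<times> out_tree_V j l"
  unfolding out_tree_E_def out_tree_V_def by auto

lemma
  assumes "inj_on f V1" "E1 \<subseteq> V1 \<times> V1" "f ` V1 \<subseteq> V" "\<And>x y. (x, y) \<in> E1 \<Longrightarrow> (f x, f y) \<in> E"
  shows subgraph_image: "subgraph (f ` V1) (map_prod f f ` E1) V E"
    and digraph_iso_image: "digraph_iso f V1 E1 (f ` V1) (map_prod f f ` E1)"
proof -
  show "subgraph (f ` V1) (map_prod f f ` E1) V E"
    using assms(2-4) unfolding subgraph_def by auto
  have "(x, y) \<in> E1"
    if xy: "x \<in> V1" "y \<in> V1" and "(f x, f y) \<in> map_prod f f ` E1" for x y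
  proof -
    obtain a b where "(a, b) \<in> E1" "f a = f x" "f b = f y"
      using \<open>(f x, f y) \<in> map_prod f f ` E1\<close> by auto
    moreover have "a = x" "b = y"
      using calculation assms(1,2) xy by (auto dest: inj_onD)
    ultimately show ?thesis
      by simp
  qed
  then show "digraph_iso f V1 E1 (f ` V1) (map_prod f f ` E1)"
    using assms(1) unfolding digraph_iso_def bij_betw_def by force
qed

lemma delta_common_with_dense_subset:
  assumes P: "delta_common_with P d" and G: "digraph V E"
    and W: "W \<subseteq> V" "W \<noteq> {}" and F: "F \<subseteq> E"
    and deg: "\<And>v. v \<in> W \<Longrightarrow> d \<le> card (F `` {v} \<inter> W)"
  shows "\<exists>v\<in>W. P V E v"
proof -
  define FW where "FW = F \<inter> W \<times> W"
  have "digraph W FW"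
    using G W F finite_subset unfolding digraph_def FW_def by blast
  moreover have "subgraph W FW V E"
    using W F unfolding subgraph_def FW_def by auto
  moreover have "min_outdeg_ge W FW d"
  proof -
    have "{w. (v, w) \<in> FW} = F `` {v} \<inter> W" if "v \<in> W" for v
      using that unfolding FW_def by auto
    then show ?thesis
      using W deg unfolding min_outdeg_ge_def out_degree_def by simp
  qed
  ultimately show ?thesis
    using P G unfolding delta_common_with_def by blast
qed

locale branching_levels =
  fixes V :: "'a set" and E :: "('a \<times> 'a) set" and S :: "'a set" and c :: nat
  assumes digraph: "digraph V E" and S_subset: "S \<subseteq> V"
begin

lemma finite_V: "finite V" and E_subset: "E \<subseteq> V \<times> V"
  using digraph unfolding digraph_def by auto

lemma finite_Image: "finite (E `` {v})"
  using finite_subset[OF _ finite_V, of "E `` {v}"] E_subset by blast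

lemma out_degree_eq: "out_degree E v = card (E `` {v})"
  unfolding out_degree_def by (metis Image_singleton)

text \<open>Level \<open>i\<close> consists of the roots of homomorphic, not necessarily injective, images of the
  complete \<open>c\<close>-ary out-tree of depth \<open>i\<close> with all leaves in \<open>S\<close>.\<close>

primrec level :: "nat \<Rightarrow> 'a set" where
  "level 0 = S"
| "level (Suc i) = {v \<in> V. c \<le> card (E `` {v} \<inter> level i)}"

lemma level_subset: "level i \<subseteq> V"
  using S_subset by (cases i) auto

definition level_edges :: "nat \<Rightarrow> ('a \<times> 'a) set" where
  "level_edges k = {(v, w) \<in> E. \<forall>i<k. w \<in> level i \<longrightarrow> v \<in> level (Suc i)}"

lemma level_edges_subset: "level_edges k \<subseteq> E"
  unfolding level_edges_def by auto

lemma card_level_edges_Image: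
  assumes "1 \<le> c" "v \<in> V" "d + k * c \<le> card (E `` {v})"
  shows "d + k \<le> card (level_edges k `` {v})"
proof -
  define D where "D i = (if v \<in> level (Suc i) then {} else E `` {v} \<inter> level i)" for i
  have "card (D i) \<le> c - 1" for i
    using assms(2) unfolding D_def by auto
  then have card_D: "card (\<Union>i<k. D i) \<le> k * (c - 1)"
    using card_UN_le[of "{..<k}" D] sum_bounded_above[of "{..<k}" "\<lambda>i. card (D i)" "c - 1"]
    by simp
  have "E `` {v} \<subseteq> level_edges k `` {v} \<union> (\<Union>i<k. D i)"
    unfolding level_edges_def D_def by auto
  then have "card (E `` {v}) \<le> card (level_edges k `` {v} \<union> (\<Union>i<k. D i))"
    by (rule card_mono[rotated])
      (use finite_Image finite_subset[OF Image_mono[OF level_edges_subset subset_refl] finite_Image]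
        in \<open>auto simp: D_def\<close>)
  also have "\<dots> \<le> card (level_edges k `` {v}) + k * (c - 1)"
    using card_Un_le card_D by (meson add_le_mono le_refl le_trans)
  finally have "card (E `` {v}) \<le> card (level_edges k `` {v}) + k * (c - 1)" .
  moreover have "k * c = k * (c - 1) + k"
    using assms(1) by (cases c) auto
  ultimately show ?thesis
    using assms(3) by linarith
qed

definition off_levels :: "nat \<Rightarrow> nat \<Rightarrow> 'a set" where
  "off_levels k n = {v \<in> V. \<forall>j\<in>{n..k}. v \<notin> level j}"

lemma off_levels_closed:
  assumes top_empty: "level k = {}" and v: "v \<in> off_levels k n" and vw: "(v, w) \<in> level_edges k"
  shows "w \<in> off_levels k n"
proof -
  have "w \<notin> level j" if j: "j \<in> {n..k}" for j
  proof
    assume w: "w \<in> level j"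
    then have "j < k"
      using j top_empty by (cases "j = k") auto
    then have "v \<in> level (Suc j)"
      using vw w unfolding level_edges_def by blast
    moreover have "Suc j \<in> {n..k}"
      using j \<open>j < k\<close> by simp
    ultimately show False
      using v unfolding off_levels_def by blast
  qed
  moreover have "w \<in> V"
    using vw level_edges_subset E_subset by blast
  ultimately show ?thesis
    unfolding off_levels_def by blast
qed

lemma off_levels_nonempty:
  assumes top_empty: "level k = {}" and "V \<noteq> {}"
    and out: "\<And>v. v \<in> V \<Longrightarrow> k \<le> card (level_edges k `` {v})"
    and "n \<le> k"
  shows "off_levels k n \<noteq> {}"
  using \<open>n \<le> k\<close>
proof (induction rule: inc_induct)
  case base
  then show ?case
    using top_empty \<open>V \<noteq> {}\<close> unfolding off_levels_def by (auto simp: le_antisym)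
next
  case (step n)
  then obtain v where v: "v \<in> off_levels k (Suc n)"
    by blast
  then have "0 < card (level_edges k `` {v})"
    using out[of v] step.hyps unfolding off_levels_def by simp
  then obtain w where vw: "(v, w) \<in> level_edges k"
    by (auto simp: card_gt_0_iff)
  have "w \<notin> level n"
  proof
    assume "w \<in> level n"
    then have "v \<in> level (Suc n)"
      using vw step.hyps unfolding level_edges_def by blast
    moreover have "Suc n \<in> {Suc n..k}"
      using step.hyps by simp
    ultimately show False
      using v unfolding off_levels_def by blast
  qed
  moreover have "w \<in> off_levels k (Suc n)"
    using off_levels_closed[OF top_empty v vw] .
  ultimately have "w \<in> off_levels k n"
    unfolding off_levels_def by (auto simp: Suc_le_eq intro: le_neq_implies_less)
  then show ?case
    by blast
qed

lemma level_nonempty: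
  assumes P: "delta_common_with P d" and P_S: "{v \<in> V. P V E v} \<subseteq> S" and "1 \<le> c"
    and deg: "min_outdeg_ge V E (d + k * c)"
  shows "level k \<noteq> {}"
proof
  assume top_empty: "level k = {}"
  have out: "d + k \<le> card (level_edges k `` {v})" if "v \<in> V" for v
    using card_level_edges_Image[OF \<open>1 \<le> c\<close> that] deg that
    unfolding min_outdeg_ge_def out_degree_eq by blast
  let ?Y = "off_levels k 0"
  have "V \<noteq> {}"
    using deg unfolding min_outdeg_ge_def by blast
  then have "?Y \<noteq> {}"
    using off_levels_nonempty[OF top_empty _ _ le0] out by (meson add_leD2)
  moreover have "d \<le> card (level_edges k `` {v} \<inter> ?Y)" if "v \<in> ?Y" for v
  proof -
    have "level_edges k `` {v} \<inter> ?Y = level_edges k `` {v}"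
      using off_levels_closed[OF top_empty that] by blast
    then show ?thesis
      using out[of v] that unfolding off_levels_def by simp
  qed
  ultimately obtain v where "v \<in> ?Y" "P V E v"
    using delta_common_with_dense_subset[OF P digraph, of ?Y "level_edges k"] level_edges_subset
    unfolding off_levels_def by blast
  moreover from this have "v \<in> level 0"
    using P_S unfolding off_levels_def by auto
  ultimately show False
    unfolding off_levels_def by fastforce
qed

lemma out_tree_embedding_Suc:
  assumes "Suc j \<le> k" "card (out_tree_V (Suc j) l) \<le> c"
    and f_inj: "inj_on f (out_tree_V j l)"
    and f_level: "\<forall>s\<in>out_tree_V j l. f s \<in> level (k - length s)"
    and f_edge: "\<forall>(s, t)\<in>out_tree_E j l. (f s, f t) \<in> E"
  shows "\<exists>f'. inj_on f' (out_tree_V (Suc j) l)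
    \<and> (\<forall>s\<in>out_tree_V (Suc j) l. f' s \<in> level (k - length s))
    \<and> (\<forall>(s, t)\<in>out_tree_E (Suc j) l. (f' s, f' t) \<in> E)"
proof -
  define T where "T = out_tree_V j l"
  define I where "I = out_tree_leaves (Suc j) l"
  define C where "C t = E `` {f (butlast t)} \<inter> level (k - Suc j)" for t
  have T_I: "T \<inter> I = {}" "out_tree_V (Suc j) l = T \<union> I"
    unfolding T_def I_def by (simp_all add: out_tree_V_Int_leaves_Suc out_tree_V_Suc)
  have finite_T_I: "finite T" "finite I"
    unfolding T_def I_def by (simp_all add: finite_out_tree_V finite_out_tree_leaves)
  have "card I + card (f ` T) = card (T \<union> I)"
    using T_I(1) f_inj finite_T_I unfolding T_def by (simp add: card_image card_Un_disjoint)
  also have "\<dots> \<le> c"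
    using assms(2) T_I(2) by simp
  finally have card_I_fT: "card I + card (f ` T) \<le> c" .
  have "finite (C t) \<and> card I + card (f ` T) \<le> card (C t)" if "t \<in> I" for t
  proof -
    have "butlast t \<in> T" "length (butlast t) = j"
      using that unfolding T_def I_def out_tree_leaves_def out_tree_V_def
      by (auto dest: in_set_butlastD)
    then have "f (butlast t) \<in> level (Suc (k - Suc j))"
      using f_level assms(1) unfolding T_def by (metis Suc_diff_Suc Suc_le_lessD)
    then show ?thesis
      using card_I_fT finite_Image unfolding C_def by simp
  qed
  then obtain g where g_inj: "inj_on g I" and g_C: "\<And>t. t \<in> I \<Longrightarrow> g t \<in> C t - f ` T"
    using greedy_distinct_representatives[of I "f ` T" C] finite_T_I by blast
  define f' where "f' = override_on f g I"
  have f'_T: "f' s = f s" if "s \<in> T" for s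
  proof -
    have "s \<notin> I"
      using that T_I(1) by blast
    then show ?thesis
      unfolding f'_def by simp
  qed
  have f'_I: "f' t = g t" if "t \<in> I" for t
    using that unfolding f'_def by simp
  have "f' ` T = f ` T"
    by (rule image_cong) (simp_all add: f'_T)
  moreover have "f' ` I = g ` I"
    by (rule image_cong) (simp_all add: f'_I)
  moreover have "T - I = T" "I - T = I"
    using T_I(1) by blast+
  moreover have "f ` T \<inter> g ` I = {}"
    using g_C by (fastforce simp: image_iff)
  ultimately have "f' ` (T - I) \<inter> f' ` (I - T) = {}"
    by simp
  moreover have "inj_on f' T"
    using f_inj unfolding T_def[symmetric] by (simp add: inj_on_cong[of T f' f] f'_T)
  moreover have "inj_on f' I"
    using g_inj by (simp add: inj_on_cong[of I f' g] f'_I)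
  ultimately have "inj_on f' (T \<union> I)"
    unfolding inj_on_Un by blast
  moreover have "f' s \<in> level (k - length s)" if "s \<in> T \<union> I" for s
  proof (cases "s \<in> T")
    case True
    then show ?thesis
      using f_level f'_T unfolding T_def by simp
  next
    case False
    then have "s \<in> I"
      using that by blast
    then show ?thesis
      using f'_I g_C unfolding I_def out_tree_leaves_def C_def by auto
  qed
  moreover have "(f' s, f' t) \<in> E" if st: "(s, t) \<in> out_tree_E (Suc j) l" for s t
  proof (cases "(s, t) \<in> out_tree_E j l")
    case True
    then have "s \<in> T" "t \<in> T"
      using out_tree_E_subset unfolding T_def by blast+
    then show ?thesis
      using f_edge True f'_T by auto
  next
    case False
    then obtain i where "s \<in> out_tree_leaves j l" "t = s @ [i]" "i < l"
      using st unfolding out_tree_E_Suc by blast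
    moreover from this have "s \<in> T" "t \<in> I"
      using out_tree_leaves_subset_V unfolding T_def I_def out_tree_leaves_def by auto
    ultimately show ?thesis
      using f'_T f'_I g_C[of t] unfolding C_def by auto
  qed
  ultimately show ?thesis
    unfolding T_I(2) by (intro exI[of _ f'] conjI ballI) auto
qed

lemma out_tree_embedding:
  assumes "r \<in> level k" "card (out_tree_V k l) \<le> c" "j \<le> k"
  shows "\<exists>f. inj_on f (out_tree_V j l)
    \<and> (\<forall>s\<in>out_tree_V j l. f s \<in> level (k - length s))
    \<and> (\<forall>(s, t)\<in>out_tree_E j l. (f s, f t) \<in> E)"
  using \<open>j \<le> k\<close>
proof (induction j)
  case 0
  show ?case
    using assms(1) by (intro exI[of _ "\<lambda>_. r"]) (simp add: out_tree_V_0 out_tree_E_0)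
next
  case (Suc j)
  have "card (out_tree_V (Suc j) l) \<le> c"
    using card_mono[OF finite_out_tree_V out_tree_V_mono[OF Suc.prems]] assms(2) by (rule order_trans)
  moreover obtain f where "inj_on f (out_tree_V j l)"
    "\<forall>s\<in>out_tree_V j l. f s \<in> level (k - length s)"
    "\<forall>(s, t)\<in>out_tree_E j l. (f s, f t) \<in> E"
    using Suc by (meson Suc_leD)
  ultimately show ?case
    by (rule out_tree_embedding_Suc[OF Suc.prems])
qed

lemma out_tree_subgraph:
  assumes "level k \<noteq> {}" "card (out_tree_V k l) \<le> c"
  shows "\<exists>VB EB f. subgraph VB EB V E \<and> digraph_iso f (out_tree_V k l) (out_tree_E k l) VB EB \<and>
           (\<forall>s\<in>out_tree_leaves k l. f s \<in> S)"
proof -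
  obtain f where f_inj: "inj_on f (out_tree_V k l)"
    and f_level: "\<forall>s\<in>out_tree_V k l. f s \<in> level (k - length s)"
    and f_edge: "\<forall>(s, t)\<in>out_tree_E k l. (f s, f t) \<in> E"
    using out_tree_embedding[OF _ assms(2) order_refl] assms(1) by blast
  have f_V: "f ` out_tree_V k l \<subseteq> V"
    unfolding image_subset_iff using f_level level_subset by blast
  have f_E: "(f s, f t) \<in> E" if "(s, t) \<in> out_tree_E k l" for s t
    using f_edge that by blast
  have f_leaf: "f s \<in> S" if "s \<in> out_tree_leaves k l" for s
  proof -
    have "s \<in> out_tree_V k l" "length s = k"
      using that out_tree_leaves_subset_V unfolding out_tree_leaves_def by auto
    then show ?thesis
      using f_level by (metis diff_self_eq_0 level.simps(1))
  qed
  show ?thesis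
    using subgraph_image[OF f_inj out_tree_E_subset f_V f_E]
      digraph_iso_image[OF f_inj out_tree_E_subset f_V f_E] f_leaf
    by (intro exI[of _ "f ` out_tree_V k l"] exI[of _ "map_prod f f ` out_tree_E k l"] exI[of _ f])
      simp
qed

end

theorem theorem3p5:
  fixes P :: "'a set \<Rightarrow> ('a \<times> 'a) set \<Rightarrow> 'a \<Rightarrow> bool"
    and d k l :: nat and V :: "'a set" and E :: "('a \<times> 'a) set"
  assumes "delta_common_with P d"
    and "k \<ge> 1" and "l \<ge> 2"
    and "digraph V E"
    and "min_outdeg_ge V E (d + 2 * k * l ^ k)"
  shows "\<exists>VB EB f. subgraph VB EB V E \<and> digraph_iso f (out_tree_V k l) (out_tree_E k l) VB EB \<and>
           (\<forall>s\<in>out_tree_leaves k l. P V E (f s))"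
proof -
  define c where "c = 2 * l ^ k"
  interpret branching_levels V E "{v \<in> V. P V E v}" c
    using assms(4) by unfold_locales auto
  have "level k \<noteq> {}"
    using level_nonempty[OF assms(1)] assms(3,5) unfolding c_def by (simp add: mult.assoc mult.left_commute)
  moreover have "card (out_tree_V k l) \<le> c"
    using card_out_tree_V_less[OF assms(3)] unfolding c_def by (simp add: less_imp_le)
  ultimately obtain VB EB f where "subgraph VB EB V E"
    "digraph_iso f (out_tree_V k l) (out_tree_E k l) VB EB"
    "\<forall>s\<in>out_tree_leaves k l. f s \<in> {v \<in> V. P V E v}"
    using out_tree_subgraph by blast
  then show ?thesis
    by auto
qed

end
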